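(* Let $\alpha\in(0,1]$, $V\subseteq\{1,\dots,m\}$, and let $\tau=(\tau_k)_{1\le k\le m}$ be a threshold family with values in $\mathcal A$ satisfying (C1) at level $\alpha$ w.r.t. $V$. Let $U\subseteq V$ be nonempty and $\lambda\in\{\tau_{|U|},\tau_{|V|}\}$. Define $\tilde\tau$ by $\tilde\tau_k=\sup\{t\in\mathcal A:\ t\le\lambda,\ \sum_{\ell=1}^{|U|-k+1}(\mathbf H(\lambda,t))_{[\ell:U]}\le k\alpha\}$ for $1\le k\le|U|-1$, $\tilde\tau_{|U|}=\lambda$, and $\tilde\tau_k=\sup\mathcal A$ for $k>|U|$. Then $\tau_k\le\tilde\tau_k$ for all $k\in\{1,\dots,m\}$. In particular, $\tau$ satisfies (C1) at level $\alpha$ w.r.t. every $U\subseteq V$.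
   Context: $F_1,\dots,F_m$ are nondecreasing functions. Support: $\mathcal A_i=\{x\in\mathbb R:\forall\varepsilon>0,\ F_i(x+\varepsilon)-F_i(x-\varepsilon)>0\}$ and $\mathcal A=\{0\}\cup\bigcup_i\mathcal A_i$ (when $\mathcal A$ is finite the suprema above are maxima). A threshold family is a nondecreasing sequence $(\tau_k)_{1\le k\le m}$ of nonnegative reals. For $F_i(s)<1$, $\mathbf H_i(s,t)=F_i(t)/(1-F_i(s))$; $(\mathbf H(s,t))_{[\ell:U]}$ is the $\ell$-th largest of $(\mathbf H_i(s,t))_{i\in U}$. Condition (C1) at level $\alpha$ w.r.t. $U$: $F_i(\tau_{|U|})<1$ for all $i\in U$ and $\max_{1\le k\le|U|}\max_{A\subseteq U,|A|=|U|-k+1}\frac1k\sum_{i\in A}\mathbf H_i(\tau_{|U|},\tau_k)\le\alpha$. *)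

theory Defs
  imports "HOL-Analysis.Analysis"
begin

definition supp_F :: "(nat \<Rightarrow> real \<Rightarrow> real) \<Rightarrow> nat \<Rightarrow> real set" where
  "supp_F F i = {x. \<forall>\<epsilon>>0. F i (x + \<epsilon>) - F i (x - \<epsilon>) > 0}"

definition Aset :: "nat \<Rightarrow> (nat \<Rightarrow> real \<Rightarrow> real) \<Rightarrow> real set" where
  "Aset m F = {0} \<union> (\<Union>i\<in>{1..m}. supp_F F i)"

definition HH :: "(nat \<Rightarrow> real \<Rightarrow> real) \<Rightarrow> nat \<Rightarrow> real \<Rightarrow> real \<Rightarrow> real" where
  "HH F i s t = F i t / (1 - F i s)"

text \<open>The l-th largest (l >= 1) of the values f i, i in U (finite U), counted with multiplicity.\<close>
definition kth_largest :: "(nat \<Rightarrow> real) \<Rightarrow> nat set \<Rightarrow> nat \<Rightarrow> real" where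
  "kth_largest f U l = rev (sort (map f (sorted_list_of_set U))) ! (l - 1)"

definition threshold_family :: "nat \<Rightarrow> (nat \<Rightarrow> real) \<Rightarrow> bool" where
  "threshold_family m \<tau> \<longleftrightarrow> (\<forall>k\<in>{1..m}. 0 \<le> \<tau> k) \<and>
     (\<forall>k\<in>{1..m}. \<forall>k'\<in>{1..m}. k \<le> k' \<longrightarrow> \<tau> k \<le> \<tau> k')"

definition C1 :: "(nat \<Rightarrow> real \<Rightarrow> real) \<Rightarrow> (nat \<Rightarrow> real) \<Rightarrow> real \<Rightarrow> nat set \<Rightarrow> bool" where
  "C1 F \<tau> \<alpha> U \<longleftrightarrow> (\<forall>i\<in>U. F i (\<tau> (card U)) < 1) \<and>
     (\<forall>k\<in>{1..card U}. \<forall>A. A \<subseteq> U \<and> card A = card U - k + 1 \<longrightarrow>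
        (1 / real k) * (\<Sum>i\<in>A. HH F i (\<tau> (card U)) (\<tau> k)) \<le> \<alpha>)"

text \<open>The family tilde-tau (extended-real valued, so that suprema of unbounded/empty sets make sense).\<close>
definition tilde_tau :: "nat \<Rightarrow> (nat \<Rightarrow> real \<Rightarrow> real) \<Rightarrow> real \<Rightarrow> nat set \<Rightarrow> real \<Rightarrow> nat \<Rightarrow> ereal" where
  "tilde_tau m F \<alpha> U lam k =
     (if 1 \<le> k \<and> k \<le> card U - 1 then
        Sup (ereal ` {t \<in> Aset m F. t \<le> lam \<and>
               (\<Sum>l=1..card U - k + 1. kth_largest (\<lambda>i. HH F i lam t) U l) \<le> real k * \<alpha>})
      else if k = card U then ereal lam
      else Sup (ereal ` Aset m F))"

end

theory Submission
  imports Defs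
begin

text \<open>Lowering s lowers \<open>F\<^sub>i(s)\<close> and hence \<open>H\<^sub>i(s, t)\<close>, and adding indices
  adds nonnegative terms. So (C1) for V bounds by \<open>k\<alpha>\<close> every sum of at most
  \<open>|V| - k + 1\<close> terms \<open>H\<^sub>i(s, \<tau>\<^sub>k)\<close>, \<open>i \<in> V\<close>, whenever \<open>s \<le> \<tau>\<^bsub>|V|\<^esub>\<close>.
  The \<open>|U| - k + 1\<close> largest values of \<open>H(\<lambda>, \<tau>\<^sub>k)\<close> over U form such a sum, so
  \<open>\<tau>\<^sub>k\<close> is admissible in the supremum defining \<open>\<tilde>\<tau>\<^sub>k\<close>; taking \<open>s = \<tau>\<^bsub>|U'|\<^esub>\<close>
  gives (C1) for every \<open>U' \<subseteq> V\<close>.\<close>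

lemma insort_map_eq_map_insort_key: "insort (f x) (map f ys) = map f (insort_key f x ys)"
  by (induction ys) auto

lemma sort_map_eq_map_sort_key: "sort (map f xs) = map f (sort_key f xs)"
  by (induction xs) (auto simp: insort_map_eq_map_insort_key)

lemma sum_nth_pred_eq_sum_list_take:
  fixes xs :: "'a::comm_monoid_add list"
  assumes "j \<le> length xs"
  shows "(\<Sum>l=1..j. xs ! (l - 1)) = sum_list (take j xs)"
proof -
  have "(\<Sum>l=1..j. xs ! (l - 1)) = (\<Sum>i=0..<j. xs ! i)"
    by (rule sum.reindex_bij_witness[of _ "\<lambda>i. i + 1" "\<lambda>l. l - 1"]) auto
  also have "\<dots> = sum_list (take j xs)"
    using assms by (simp add: sum_list_sum_nth min_def)
  finally show ?thesis .
qed

lemma sum_kth_largest_eq_sum_subset: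
  assumes "finite U" "j \<le> card U"
  obtains B where "B \<subseteq> U" "card B = j" "(\<Sum>l=1..j. kth_largest f U l) = (\<Sum>i\<in>B. f i)"
proof -
  define L where "L = rev (sort_key f (sorted_list_of_set U))"
  have L: "distinct L" "set L = U" "length L = card U"
    using assms by (auto simp: L_def length_sorted_list_of_set)
  have "(\<Sum>l=1..j. kth_largest f U l) = sum_list (take j (map f L))"
    unfolding kth_largest_def L_def sort_map_eq_map_sort_key rev_map
    using assms L by (intro sum_nth_pred_eq_sum_list_take) (simp add: L_def)
  also have "\<dots> = (\<Sum>i\<in>set (take j L). f i)"
    using L by (simp add: take_map sum_list_distinct_conv_sum_set)
  finally have "(\<Sum>l=1..j. kth_largest f U l) = (\<Sum>i\<in>set (take j L). f i)" .
  moreover have "set (take j L) \<subseteq> U"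
    using set_take_subset[of j L] L(2) by simp
  moreover have "card (set (take j L)) = j"
    using L assms by (simp add: distinct_card)
  ultimately show ?thesis
    using that by blast
qed

lemma HH_le_HH_larger_denominator:
  assumes "0 \<le> F i t" "F i s \<le> F i s'" "F i s' < 1"
  shows "HH F i s t \<le> HH F i s' t"
  unfolding HH_def using assms by (intro divide_left_mono) auto

lemma threshold_family_mono_on: "threshold_family m \<tau> \<Longrightarrow> mono_on {1..m} \<tau>"
  unfolding threshold_family_def by (intro mono_onI) auto

lemma C1_sum_HH_le:
  assumes C1V: "C1 F \<tau> \<alpha> V" and "finite V"
    and F_nonneg: "\<And>i x. i \<in> V \<Longrightarrow> 0 \<le> F i x"
    and B: "B \<subseteq> V" "card B \<le> card V - k + 1"
    and k: "1 \<le> k" "k \<le> card V"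
    and s: "\<And>i. i \<in> V \<Longrightarrow> F i s \<le> F i (\<tau> (card V))"
  shows "(\<Sum>i\<in>B. HH F i s (\<tau> k)) \<le> real k * \<alpha>"
proof -
  have F_lt_1: "\<And>i. i \<in> V \<Longrightarrow> F i (\<tau> (card V)) < 1"
    using C1V unfolding C1_def by auto
  have "card V - k + 1 \<le> card V"
    using k by linarith
  then obtain A where A: "B \<subseteq> A" "A \<subseteq> V" "card A = card V - k + 1"
    using exists_subset_between[OF B(2) _ B(1) \<open>finite V\<close>] by blast
  have "(\<Sum>i\<in>B. HH F i s (\<tau> k)) \<le> (\<Sum>i\<in>B. HH F i (\<tau> (card V)) (\<tau> k))"
    using B(1) by (intro sum_mono HH_le_HH_larger_denominator) (auto simp: F_nonneg s F_lt_1)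
  also have "\<dots> \<le> (\<Sum>i\<in>A. HH F i (\<tau> (card V)) (\<tau> k))"
    using A \<open>finite V\<close> F_nonneg F_lt_1 unfolding HH_def
    by (intro sum_mono2) (auto intro!: divide_nonneg_pos dest: finite_subset)
  also have "\<dots> \<le> real k * \<alpha>"
    using C1V A k unfolding C1_def by (auto simp: field_simps)
  finally show ?thesis .
qed

lemma C1_subset:
  assumes C1V: "C1 F \<tau> \<alpha> V" and "finite V"
    and F_mono: "\<And>i. i \<in> V \<Longrightarrow> mono (F i)"
    and F_nonneg: "\<And>i x. i \<in> V \<Longrightarrow> 0 \<le> F i x"
    and \<tau>_mono: "mono_on {1..card V} \<tau>"
    and "U \<subseteq> V"
  shows "C1 F \<tau> \<alpha> U"
proof (cases "U = {}")
  case True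
  then show ?thesis unfolding C1_def by simp
next
  case False
  have card_U: "1 \<le> card U" "card U \<le> card V"
    using False \<open>U \<subseteq> V\<close> \<open>finite V\<close> by (auto simp: Suc_le_eq card_gt_0_iff card_mono finite_subset)
  have F_le: "F i (\<tau> (card U)) \<le> F i (\<tau> (card V))" if "i \<in> V" for i
    using F_mono[OF that] mono_onD[OF \<tau>_mono, of "card U" "card V"] card_U by (auto dest: monoD)
  have "F i (\<tau> (card U)) < 1" if "i \<in> U" for i
    using C1V F_le[of i] that \<open>U \<subseteq> V\<close> unfolding C1_def by force
  moreover have "1 / real k * (\<Sum>i\<in>A. HH F i (\<tau> (card U)) (\<tau> k)) \<le> \<alpha>"
    if "k \<in> {1..card U}" "A \<subseteq> U" "card A = card U - k + 1" for k A
    using C1_sum_HH_le[OF C1V \<open>finite V\<close> F_nonneg, of A k "\<tau> (card U)"] that F_le card_U \<open>U \<subseteq> V\<close>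
    by (auto simp: field_simps)
  ultimately show ?thesis unfolding C1_def by blast
qed

lemma tau_le_tilde_tau:
  assumes C1V: "C1 F \<tau> \<alpha> V" and "finite V"
    and F_mono: "\<And>i. i \<in> V \<Longrightarrow> mono (F i)"
    and F_nonneg: "\<And>i x. i \<in> V \<Longrightarrow> 0 \<le> F i x"
    and \<tau>_mono: "mono_on {1..card V} \<tau>"
    and \<tau>_in_A: "\<tau> k \<in> Aset m F"
    and U: "U \<subseteq> V" "U \<noteq> {}"
    and lam: "\<tau> (card U) \<le> lam" "lam \<le> \<tau> (card V)"
  shows "ereal (\<tau> k) \<le> tilde_tau m F \<alpha> U lam k"
proof -
  have "finite U"
    using U(1) \<open>finite V\<close> finite_subset by blast
  have card_U: "1 \<le> card U" "card U \<le> card V"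
    using U \<open>finite V\<close> by (auto simp: Suc_le_eq card_gt_0_iff card_mono finite_subset)
  consider (below) "1 \<le> k" "k \<le> card U - 1" | (top) "k = card U" | (above) "\<not> (1 \<le> k \<and> k \<le> card U - 1)" "k \<noteq> card U"
    by blast
  then show ?thesis
  proof cases
    case below
    then have "card U - k + 1 \<le> card U" "k \<le> card U"
      by linarith+
    obtain B where B: "B \<subseteq> U" "card B = card U - k + 1"
      "(\<Sum>l=1..card U - k + 1. kth_largest (\<lambda>i. HH F i lam (\<tau> k)) U l) = (\<Sum>i\<in>B. HH F i lam (\<tau> k))"
      by (rule sum_kth_largest_eq_sum_subset[OF \<open>finite U\<close> \<open>card U - k + 1 \<le> card U\<close>])
    have "(\<Sum>i\<in>B. HH F i lam (\<tau> k)) \<le> real k * \<alpha>"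
    proof (rule C1_sum_HH_le[OF C1V \<open>finite V\<close> F_nonneg])
      show "B \<subseteq> V" "card B \<le> card V - k + 1" "1 \<le> k" "k \<le> card V"
        using B U below card_U by auto
      show "F i lam \<le> F i (\<tau> (card V))" if "i \<in> V" for i
        using F_mono[OF that] lam by (auto dest: monoD)
    qed
    moreover have "\<tau> k \<le> lam"
      using mono_onD[OF \<tau>_mono, of k "card U"] below \<open>k \<le> card U\<close> card_U lam by auto
    ultimately have "\<tau> k \<in> {t \<in> Aset m F. t \<le> lam \<and>
        (\<Sum>l=1..card U - k + 1. kth_largest (\<lambda>i. HH F i lam t) U l) \<le> real k * \<alpha>}"
      using \<tau>_in_A B by auto
    then show ?thesis
      using below unfolding tilde_tau_def by (auto intro: Sup_upper)
  next
    case top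
    then show ?thesis using lam card_U unfolding tilde_tau_def by auto
  next
    case above
    then show ?thesis using \<tau>_in_A unfolding tilde_tau_def by (auto intro: Sup_upper)
  qed
qed

theorem mainTheorem16:
  fixes m :: nat and F :: "nat \<Rightarrow> real \<Rightarrow> real" and \<tau> :: "nat \<Rightarrow> real"
    and \<alpha> lam :: real and U V :: "nat set"
  assumes F_mono: "\<And>i. i \<in> {1..m} \<Longrightarrow> mono (F i)"
    and F_range: "\<And>i x. i \<in> {1..m} \<Longrightarrow> 0 \<le> F i x \<and> F i x \<le> 1"
    and alpha: "0 < \<alpha>" "\<alpha> \<le> 1"
    and V: "V \<subseteq> {1..m}"
    and thr: "threshold_family m \<tau>"
    and valsA: "\<And>k. k \<in> {1..m} \<Longrightarrow> \<tau> k \<in> Aset m F"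
    and C1V: "C1 F \<tau> \<alpha> V"
    and U: "U \<subseteq> V" "U \<noteq> {}"
    and lam: "lam \<in> {\<tau> (card U), \<tau> (card V)}"
  shows "(\<forall>k\<in>{1..m}. ereal (\<tau> k) \<le> tilde_tau m F \<alpha> U lam k) \<and>
         (\<forall>U'. U' \<subseteq> V \<longrightarrow> C1 F \<tau> \<alpha> U')"
proof -
  have "finite V" using V finite_subset by blast
  have card_V: "card V \<le> m" using card_mono[OF _ V] by simp
  have card_U: "1 \<le> card U" "card U \<le> card V"
    using U \<open>finite V\<close> by (auto simp: Suc_le_eq card_gt_0_iff card_mono finite_subset)
  have F_V: "\<And>i. i \<in> V \<Longrightarrow> mono (F i)" "\<And>i x. i \<in> V \<Longrightarrow> 0 \<le> F i x"
    using F_mono F_range V by auto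
  have \<tau>_mono: "mono_on {1..card V} \<tau>"
    using threshold_family_mono_on[OF thr] card_V by (auto intro: mono_on_subset)
  have "\<tau> (card U) \<le> lam" "lam \<le> \<tau> (card V)"
    using lam mono_onD[OF \<tau>_mono, of "card U" "card V"] card_U by auto
  then show ?thesis
    using tau_le_tilde_tau[OF C1V \<open>finite V\<close> F_V \<tau>_mono valsA U]
      C1_subset[OF C1V \<open>finite V\<close> F_V \<tau>_mono] by blast
qed

end
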